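(* Let $g=(U,v)\in\mathrm{Aff}(n,\mathbb{C})$ where $U\in\mathrm{GL}(n,\mathbb{C})$ is unipotent (all eigenvalues equal to $1$) and $v\in\mathbb{C}^n$ is arbitrary. Then $g$ is strongly $c$-reversible; in particular $g$ is a product of two coninvolutions in $\mathrm{Aff}(n,\mathbb{C})$.
   Context: $\mathrm{Aff}(n,\mathbb{C})$ is the group of affine maps $z\mapsto Az+v$, written $(A,v)$, with product $(A,v)(B,w)=(AB,Aw+v)$ and identity $e=(I_n,0)$. For $g=(A,v)$ set $\overline{g}=(\overline{A},\overline{v})$. An element $h$ is a coninvolution if $h\overline{h}=e$; $g$ is strongly $c$-reversible if there is a coninvolution $h$ with $hgh^{-1}=\overline{g}^{-1}$. *)

theory Defs
  imports "HOL-Analysis.Analysis"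
begin

text \<open>Affine group Aff(n,C): pairs (A,v) with A invertible, representing z |-> A z + v.
  The dimension n is the cardinality of the finite index type 'n.\<close>

type_synonym 'n aff = "(complex^'n^'n) \<times> (complex^'n)"

definition aff_group :: "'n::finite aff set" where
  "aff_group = {(A, v). invertible A}"

definition aff_mult :: "'n::finite aff \<Rightarrow> 'n aff \<Rightarrow> 'n aff" where
  "aff_mult g h = (case g of (A, v) \<Rightarrow> case h of (B, w) \<Rightarrow> (A ** B, A *v w + v))"

definition aff_id :: "'n::finite aff" where
  "aff_id = (mat 1, 0)"

definition aff_inv :: "'n::finite aff \<Rightarrow> 'n aff" where
  "aff_inv g = (case g of (A, v) \<Rightarrow> (matrix_inv A, - (matrix_inv A *v v)))"

definition aff_conj :: "'n::finite aff \<Rightarrow> 'n aff" where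
  "aff_conj g = (case g of (A, v) \<Rightarrow> ((\<chi> i j. cnj (A $ i $ j)), (\<chi> i. cnj (v $ i))))"

definition coninvolution :: "'n::finite aff \<Rightarrow> bool" where
  "coninvolution h \<longleftrightarrow> h \<in> aff_group \<and> aff_mult h (aff_conj h) = aff_id"

definition strongly_c_reversible :: "'n::finite aff \<Rightarrow> bool" where
  "strongly_c_reversible g \<longleftrightarrow>
     (\<exists>h. coninvolution h \<and>
          aff_mult (aff_mult h g) (aff_inv h) = aff_inv (aff_conj g))"

definition unipotent :: "complex^'n^'n \<Rightarrow> bool" where
  "unipotent A \<longleftrightarrow> (\<forall>c x. x \<noteq> 0 \<and> A *v x = c *s x \<longrightarrow> c = 1)"

end

(*
  By the Jordan normal form, U is similar to a direct sum of Jordan blocks J = J_k(1). On each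
  block, conjugating by z \<mapsto> c z + a reduces the translation part to 0 or to the last basis
  vector e, and both (J, 0) and (J, e) are products of two real affine involutions, which are
  coninvolutions. The signed Pascal matrix P = (s (-1)^j binom(j, i)) with s^2 = 1 satisfies
  P^2 = 1 and J P J = P, so (J, 0) = (P, 0) (P J, 0); and the augmented matrix of (J_k(1), e) is
  J_(k+1)(1), so the same identity one dimension higher handles (J, e).
  If g = k x1 x2 k^-1 with coninvolutions x1, x2, then g = (k x1 conj(k)^-1) (conj(k) x2 k^-1) is
  again a product of two coninvolutions, and a product h1 h2 of coninvolutions is conjugated to
  conj(h1 h2)^-1 = h2 h1 by the coninvolution conj(h1).
*)

theory Submission
  imports Defs Jordan_Normal_Form.Jordan_Normal_Form_Existence
begin

unbundle no vec_syntax

section \<open>Signed Pascal matrices and Jordan blocks\<close>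

lemma sum_alternating_choose_mult:
  "(\<Sum>m\<le>j. (-1)^m * of_nat (j choose m) * of_nat (m choose i) :: 'a::comm_ring_1)
     = (if i = j then (-1)^j else 0)"
proof (cases "i \<le> j")
  case False
  then show ?thesis by (auto intro!: sum.neutral simp: binomial_eq_0)
next
  case True
  have "(\<Sum>m\<le>j. (-1)^m * of_nat (j choose m) * of_nat (m choose i) :: 'a)
      = (\<Sum>m\<in>{i..j}. (-1)^m * of_nat (j choose m) * of_nat (m choose i))"
    by (rule sum.mono_neutral_right) (auto simp: binomial_eq_0)
  also have "\<dots> = (\<Sum>l\<in>{0..j-i}. (-1)^(l+i) * of_nat (j choose (l+i)) * of_nat ((l+i) choose i))"
    using True
      sum.shift_bounds_cl_nat_ivl[of "\<lambda>m. (-1)^m * of_nat (j choose m) * of_nat (m choose i) :: 'a" 0 i "j-i"]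
    by simp
  also have "\<dots> = (\<Sum>l\<in>{0..j-i}. (-1)^i * of_nat (j choose i) * ((-1)^l * of_nat ((j-i) choose l)))"
  proof (rule sum.cong)
    fix l assume "l \<in> {0..j-i}"
    have "(j choose (l+i)) * ((l+i) choose i) = (j choose i) * ((j - i) choose l)"
      using choose_mult[of i "l+i" j] \<open>l \<in> {0..j-i}\<close> True by simp
    then have "(of_nat (j choose (l+i)) * of_nat ((l+i) choose i) :: 'a)
        = of_nat (j choose i) * of_nat ((j - i) choose l)"
      by (metis of_nat_mult)
    then show "(-1)^(l+i) * of_nat (j choose (l+i)) * of_nat ((l+i) choose i)
        = (-1)^i * of_nat (j choose i) * ((-1)^l * of_nat ((j-i) choose l) :: 'a)"
      by (simp add: power_add algebra_simps)
  qed simp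
  also have "\<dots> = (-1)^i * of_nat (j choose i) * (\<Sum>l\<le>j-i. (-1)^l * of_nat ((j-i) choose l))"
    by (simp add: sum_distrib_left atLeast0AtMost)
  also have "\<dots> = (if i = j then (-1)^j else 0)"
    using choose_alternating_sum[of "j-i", where 'a='a] True by (cases "i = j") simp_all
  finally show ?thesis .
qed

lemma index_mult_mat_sum:
  "A \<in> carrier_mat n k \<Longrightarrow> B \<in> carrier_mat k m \<Longrightarrow> i < n \<Longrightarrow> j < m \<Longrightarrow>
    (A * B) $$ (i, j) = (\<Sum>l<k. A $$ (i, l) * B $$ (l, j))"
  by (auto simp: scalar_prod_def lessThan_atLeast0 intro!: sum.cong)

lemma index_mult_mat_vec_sum:
  "A \<in> carrier_mat n k \<Longrightarrow> x \<in> carrier_vec k \<Longrightarrow> i < n \<Longrightarrow>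
    (A *\<^sub>v x) $ i = (\<Sum>l<k. A $$ (i, l) * x $ l)"
  by (auto simp: scalar_prod_def lessThan_atLeast0 intro!: sum.cong)

lemma jordan_block_one_mult_index:
  fixes X :: "'a::semiring_1 Matrix.mat"
  assumes X: "X \<in> carrier_mat k n" and ij: "i < k" "j < n"
  shows "(jordan_block k 1 * X) $$ (i, j) = X $$ (i, j) + (if Suc i < k then X $$ (Suc i, j) else 0)"
proof -
  have "(jordan_block k 1 * X) $$ (i, j) = (\<Sum>l<k. jordan_block k 1 $$ (i, l) * X $$ (l, j))"
    by (rule index_mult_mat_sum) (use X ij in auto)
  also have "\<dots> = (\<Sum>l<k. (if l = i then X $$ (l, j) else 0) + (if l = Suc i then X $$ (l, j) else 0))"
    by (rule sum.cong) (use ij in auto)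
  finally show ?thesis
    using ij by (simp add: sum.distrib)
qed

lemma mult_jordan_block_one_index:
  fixes X :: "'a::semiring_1 Matrix.mat"
  assumes X: "X \<in> carrier_mat n k" and ij: "i < n" "j < k"
  shows "(X * jordan_block k 1) $$ (i, j) = X $$ (i, j) + (if 0 < j then X $$ (i, j - 1) else 0)"
proof -
  have "(X * jordan_block k 1) $$ (i, j) = (\<Sum>l<k. X $$ (i, l) * jordan_block k 1 $$ (l, j))"
    by (rule index_mult_mat_sum) (use X ij in auto)
  also have "\<dots> = (\<Sum>l<k. (if l = j then X $$ (i, l) else 0)
      + (if l = j - 1 \<and> 0 < j then X $$ (i, l) else 0))"
    by (rule sum.cong) (use ij in auto)
  finally show ?thesis
    using ij by (cases j) (simp_all add: sum.distrib)
qed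

lemma jordan_block_one_mult_vec_index:
  fixes x :: "'a::semiring_1 Matrix.vec"
  assumes x: "x \<in> carrier_vec k" and i: "i < k"
  shows "(jordan_block k 1 *\<^sub>v x) $ i = x $ i + (if Suc i < k then x $ Suc i else 0)"
proof -
  have "(jordan_block k 1 *\<^sub>v x) $ i = (\<Sum>l<k. jordan_block k 1 $$ (i, l) * x $ l)"
    by (rule index_mult_mat_vec_sum) (use x i in auto)
  also have "\<dots> = (\<Sum>l<k. (if l = i then x $ l else 0) + (if l = Suc i then x $ l else 0))"
    by (rule sum.cong) (use i in auto)
  finally show ?thesis
    using i by (simp add: sum.distrib)
qed

definition signed_pascal_mat :: "'a::comm_ring_1 \<Rightarrow> nat \<Rightarrow> 'a Matrix.mat" where
  "signed_pascal_mat s k = Matrix.mat k k (\<lambda>(i, j). s * (-1)^j * of_nat (j choose i))"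

lemma signed_pascal_mat_carrier [simp]: "signed_pascal_mat s k \<in> carrier_mat k k"
  by (simp add: signed_pascal_mat_def)

lemma signed_pascal_mat_dim [simp]:
  "dim_row (signed_pascal_mat s k) = k" "dim_col (signed_pascal_mat s k) = k"
  by (simp_all add: signed_pascal_mat_def)

lemma signed_pascal_mat_index [simp]:
  "i < k \<Longrightarrow> j < k \<Longrightarrow> signed_pascal_mat s k $$ (i, j) = s * (-1)^j * of_nat (j choose i)"
  by (simp add: signed_pascal_mat_def)

lemma signed_pascal_mat_involution:
  fixes s :: "'a::comm_ring_1"
  assumes "s * s = 1"
  shows "signed_pascal_mat s k * signed_pascal_mat s k = 1\<^sub>m k"
proof (rule eq_matI)
  fix i j assume "i < dim_row (1\<^sub>m k :: 'a Matrix.mat)" "j < dim_col (1\<^sub>m k :: 'a Matrix.mat)"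
  then have i: "i < k" and j: "j < k" by auto
  have "(signed_pascal_mat s k * signed_pascal_mat s k) $$ (i, j)
      = (\<Sum>l<k. signed_pascal_mat s k $$ (i, l) * signed_pascal_mat s k $$ (l, j))"
    by (rule index_mult_mat_sum) (use i j in auto)
  also have "\<dots> = (s * s) * (-1)^j * (\<Sum>l<k. (-1)^l * of_nat (j choose l) * of_nat (l choose i))"
    using i j by (simp add: sum_distrib_left algebra_simps)
  also have "(\<Sum>l<k. (-1)^l * of_nat (j choose l) * of_nat (l choose i))
      = (\<Sum>l\<le>j. (-1)^l * of_nat (j choose l) * of_nat (l choose i) :: 'a)"
    by (rule sum.mono_neutral_right) (use j in \<open>auto simp: binomial_eq_0\<close>)
  finally show "(signed_pascal_mat s k * signed_pascal_mat s k) $$ (i, j) = 1\<^sub>m k $$ (i, j)"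
    using i j assms by (simp add: sum_alternating_choose_mult flip: power_add)
qed auto

text \<open>Together with \<open>P * P = 1\<close> this says that \<open>P\<close> conjugates the Jordan block to its inverse.\<close>

lemma jordan_block_signed_pascal:
  "jordan_block k 1 * signed_pascal_mat s k * jordan_block k 1 = signed_pascal_mat s k"
proof (rule eq_matI)
  fix i j assume "i < dim_row (signed_pascal_mat s k)" "j < dim_col (signed_pascal_mat s k)"
  then have i: "i < k" and j: "j < k" by auto
  let ?P = "signed_pascal_mat s k"
  have JP: "(jordan_block k 1 * ?P) $$ (i, l) = ?P $$ (i, l) + (if Suc i < k then ?P $$ (Suc i, l) else 0)"
    if "l < k" for l
    by (rule jordan_block_one_mult_index) (use i that in auto)
  have "(jordan_block k 1 * ?P * jordan_block k 1) $$ (i, j)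
      = (jordan_block k 1 * ?P) $$ (i, j) + (if 0 < j then (jordan_block k 1 * ?P) $$ (i, j - 1) else 0)"
    by (rule mult_jordan_block_one_index) (use i j in auto)
  also have "\<dots> = ?P $$ (i, j)"
  proof (cases j)
    case 0
    then show ?thesis
      using i j by (simp only: JP) simp
  next
    case (Suc j')
    have "Suc j' choose Suc i = (j' choose i) + (j' choose Suc i)" by simp
    then show ?thesis
      using i j Suc by (simp only: JP) (auto simp: algebra_simps binomial_eq_0)
  qed
  finally show "(jordan_block k 1 * ?P * jordan_block k 1) $$ (i, j) = ?P $$ (i, j)" .
qed auto

section \<open>Affine maps on JNF matrices\<close>

text \<open>The Jordan normal form is only available for the matrices of \<open>Jordan_Normal_Form\<close>, so
  the blockwise argument is carried out for affine maps \<open>(A, v)\<close> built from those matrices.\<close>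

type_synonym 'a mat_aff = "'a Matrix.mat \<times> 'a Matrix.vec"

definition mat_aff_carrier :: "nat \<Rightarrow> 'a mat_aff set" where
  "mat_aff_carrier n = carrier_mat n n \<times> carrier_vec n"

fun mat_aff_mult :: "'a::semiring_1 mat_aff \<Rightarrow> 'a mat_aff \<Rightarrow> 'a mat_aff" where
  "mat_aff_mult (A, v) (B, w) = (A * B, A *\<^sub>v w + v)"

definition mat_aff_one :: "nat \<Rightarrow> 'a::semiring_1 mat_aff" where
  "mat_aff_one n = (1\<^sub>m n, 0\<^sub>v n)"

lemma mat_aff_mult_carrier:
  "x \<in> mat_aff_carrier n \<Longrightarrow> y \<in> mat_aff_carrier n \<Longrightarrow> mat_aff_mult x y \<in> mat_aff_carrier n"
  by (cases x, cases y) (auto simp: mat_aff_carrier_def)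

lemma mat_aff_one_carrier: "mat_aff_one n \<in> mat_aff_carrier n"
  by (simp add: mat_aff_one_def mat_aff_carrier_def)

lemma mat_aff_mult_assoc:
  fixes x y z :: "'a::semiring_1 mat_aff"
  assumes "x \<in> mat_aff_carrier n" "y \<in> mat_aff_carrier n" "z \<in> mat_aff_carrier n"
  shows "mat_aff_mult (mat_aff_mult x y) z = mat_aff_mult x (mat_aff_mult y z)"
  using assms
  by (cases x, cases y, cases z)
     (auto simp: mat_aff_carrier_def assoc_mult_mat[of _ n n _ n _ n] mult_add_distrib_mat_vec[of _ n n]
        assoc_add_vec[of _ n])

lemma mat_aff_mult_one_left: "x \<in> mat_aff_carrier n \<Longrightarrow> mat_aff_mult (mat_aff_one n) x = x"
  by (cases x) (auto simp: mat_aff_carrier_def mat_aff_one_def)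

lemma mat_aff_mult_one_right: "x \<in> mat_aff_carrier n \<Longrightarrow> mat_aff_mult x (mat_aff_one n) = x"
  by (cases x) (auto simp: mat_aff_carrier_def mat_aff_one_def)

definition aug_mat :: "nat \<Rightarrow> 'a::zero_neq_one mat_aff \<Rightarrow> 'a Matrix.mat" where
  "aug_mat n x = Matrix.mat (Suc n) (Suc n) (\<lambda>(i, j).
     if i < n then if j < n then fst x $$ (i, j) else snd x $ i
     else if j < n then 0 else 1)"

lemma aug_mat_carrier: "aug_mat n x \<in> carrier_mat (Suc n) (Suc n)"
  by (simp add: aug_mat_def)

lemma aug_mat_mult:
  fixes x y :: "'a::semiring_1 mat_aff"
  assumes "x \<in> mat_aff_carrier n" "y \<in> mat_aff_carrier n"
  shows "aug_mat n (mat_aff_mult x y) = aug_mat n x * aug_mat n y"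
proof -
  obtain A v B w where xy: "x = (A, v)" "y = (B, w)" and
    c: "A \<in> carrier_mat n n" "v \<in> carrier_vec n" "B \<in> carrier_mat n n" "w \<in> carrier_vec n"
    using assms by (cases x, cases y) (auto simp: mat_aff_carrier_def)
  show ?thesis
  proof (rule eq_matI)
    fix i j assume "i < dim_row (aug_mat n x * aug_mat n y)" "j < dim_col (aug_mat n x * aug_mat n y)"
    then have i: "i < Suc n" and j: "j < Suc n" by (simp_all add: aug_mat_def)
    have "(aug_mat n x * aug_mat n y) $$ (i, j)
        = (\<Sum>l<n. aug_mat n x $$ (i, l) * aug_mat n y $$ (l, j)) + aug_mat n x $$ (i, n) * aug_mat n y $$ (n, j)"
      using index_mult_mat_sum[OF aug_mat_carrier aug_mat_carrier i j] by simp
    then show "aug_mat n (mat_aff_mult x y) $$ (i, j) = (aug_mat n x * aug_mat n y) $$ (i, j)"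
      using i j c
      by (auto simp: xy aug_mat_def index_mult_mat_sum[of _ n n] index_mult_mat_vec_sum[of _ n n]
          simp del: index_mult_mat index_mult_mat_vec)
  qed (simp_all add: aug_mat_def)
qed

lemma aug_mat_one: "aug_mat n (mat_aff_one n) = 1\<^sub>m (Suc n)"
  by (rule eq_matI) (auto simp: aug_mat_def mat_aff_one_def)

lemma aug_mat_inj:
  assumes "x \<in> mat_aff_carrier n" "y \<in> mat_aff_carrier n" "aug_mat n x = aug_mat n y"
  shows "x = y"
proof -
  have "fst x $$ (i, j) = fst y $$ (i, j)" if "i < n" "j < n" for i j
    using arg_cong[OF assms(3), of "\<lambda>M. M $$ (i, j)"] that by (simp add: aug_mat_def)
  moreover have "snd x $ i = snd y $ i" if "i < n" for i
    using arg_cong[OF assms(3), of "\<lambda>M. M $$ (i, n)"] that by (simp add: aug_mat_def)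
  ultimately show ?thesis
    using assms(1,2) by (auto simp: mat_aff_carrier_def prod_eq_iff)
qed

interpretation cnj_hom: semiring_hom cnj
  by unfold_locales simp_all

fun mat_aff_cnj :: "complex mat_aff \<Rightarrow> complex mat_aff" where
  "mat_aff_cnj (A, v) = (map_mat cnj A, map_vec cnj v)"

definition mat_aff_coninvolution :: "nat \<Rightarrow> complex mat_aff \<Rightarrow> bool" where
  "mat_aff_coninvolution n h \<longleftrightarrow> h \<in> mat_aff_carrier n \<and> mat_aff_mult h (mat_aff_cnj h) = mat_aff_one n"

lemma mat_aff_cnj_carrier: "x \<in> mat_aff_carrier n \<Longrightarrow> mat_aff_cnj x \<in> mat_aff_carrier n"
  by (cases x) (simp add: mat_aff_carrier_def)

lemma aug_mat_cnj: "x \<in> mat_aff_carrier n \<Longrightarrow> aug_mat n (mat_aff_cnj x) = map_mat cnj (aug_mat n x)"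
  by (cases x) (auto simp: mat_aff_carrier_def aug_mat_def)

lemma mat_aff_coninvolution_if_aug_mat:
  assumes x: "x \<in> mat_aff_carrier n"
    and "aug_mat n x * map_mat cnj (aug_mat n x) = 1\<^sub>m (Suc n)"
  shows "mat_aff_coninvolution n x"
proof -
  have "aug_mat n (mat_aff_mult x (mat_aff_cnj x)) = aug_mat n (mat_aff_one n)"
    using assms by (simp add: aug_mat_mult mat_aff_cnj_carrier aug_mat_cnj aug_mat_one)
  then show ?thesis
    unfolding mat_aff_coninvolution_def
    by (intro conjI x aug_mat_inj[of _ n])
       (simp_all add: x mat_aff_mult_carrier mat_aff_cnj_carrier mat_aff_one_carrier)
qed

lemma mat_aff_coninvolution_linear:
  assumes "M \<in> carrier_mat n n" "M * map_mat cnj M = 1\<^sub>m n"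
  shows "mat_aff_coninvolution n (M, 0\<^sub>v n)"
  using assms
  by (auto simp: mat_aff_coninvolution_def mat_aff_carrier_def mat_aff_one_def cnj_hom.vec_hom_zero)

lemma map_mat_cnj_signed_pascal: "map_mat cnj (signed_pascal_mat s k) = signed_pascal_mat (cnj s) k"
  by (rule eq_matI) auto

lemma map_mat_cnj_jordan_block: "map_mat cnj (jordan_block k a) = jordan_block k (cnj a)"
  by (rule eq_matI) (auto simp: jordan_block_def)

lemma signed_pascal_jordan_block_involution:
  fixes s :: "'a::comm_ring_1"
  assumes "s * s = 1"
  shows "(signed_pascal_mat s k * jordan_block k 1) * (signed_pascal_mat s k * jordan_block k 1) = 1\<^sub>m k"
proof -
  let ?P = "signed_pascal_mat s k" and ?J = "jordan_block k (1::'a)"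
  have "(?P * ?J) * (?P * ?J) = ?P * (?J * (?P * ?J))"
    by (rule assoc_mult_mat[of _ k k _ k _ k]) auto
  also have "?J * (?P * ?J) = ?J * ?P * ?J"
    by (rule assoc_mult_mat[symmetric, of _ k k _ k _ k]) auto
  finally show ?thesis
    by (simp add: jordan_block_signed_pascal signed_pascal_mat_involution[OF assms])
qed

lemma jordan_block_zero_coninvolution_product:
  "\<exists>x1 x2. mat_aff_coninvolution k x1 \<and> mat_aff_coninvolution k x2 \<and>
     (jordan_block k 1, 0\<^sub>v k) = mat_aff_mult x1 x2"
proof (intro exI conjI)
  let ?P = "signed_pascal_mat 1 k" and ?J = "jordan_block k (1::complex)"
  have real: "map_mat cnj ?P = ?P" "map_mat cnj ?J = ?J"
    by (simp_all add: map_mat_cnj_signed_pascal map_mat_cnj_jordan_block)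
  have real_PJ: "map_mat cnj (?P * ?J) = ?P * ?J"
    using cnj_hom.mat_hom_mult[OF signed_pascal_mat_carrier jordan_block_carrier] real by simp
  show "mat_aff_coninvolution k (?P, 0\<^sub>v k)"
    by (rule mat_aff_coninvolution_linear) (simp_all add: real signed_pascal_mat_involution)
  show "mat_aff_coninvolution k (?P * ?J, 0\<^sub>v k)"
    by (rule mat_aff_coninvolution_linear)
       (simp_all add: mult_carrier_mat[of _ k k] real_PJ signed_pascal_jordan_block_involution)
  have "?P * (?P * ?J) = ?J"
    by (simp add: signed_pascal_mat_involution flip: assoc_mult_mat[of _ k k _ k _ k])
  then show "(?J, 0\<^sub>v k) = mat_aff_mult (?P, 0\<^sub>v k) (?P * ?J, 0\<^sub>v k)"
    by auto
qed

text \<open>The augmented matrix of \<open>g = (J_k, e_k)\<close> is \<open>J_(k+1)\<close>, and for \<open>\<sigma> = (-1)^k\<close> the last row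
  of \<open>P = signed_pascal_mat \<sigma> (k+1)\<close> is \<open>(0, ..., 0, 1)\<close>, so \<open>P\<close> is the augmented matrix of an
  affine map \<open>x1\<close>; then \<open>g = x1 (x1 g)\<close> with both factors real involutions.\<close>

lemma jordan_block_unit_coninvolution_product:
  "\<exists>x1 x2. mat_aff_coninvolution (Suc m) x1 \<and> mat_aff_coninvolution (Suc m) x2 \<and>
     (jordan_block (Suc m) 1, unit_vec (Suc m) m) = mat_aff_mult x1 x2"
proof -
  define k where "k = Suc m"
  define \<sigma> :: complex where "\<sigma> = (-1)^k"
  define P where "P = signed_pascal_mat \<sigma> (Suc k)"
  define J where "J = jordan_block (Suc k) (1::complex)"
  define g :: "complex mat_aff" where "g = (jordan_block k 1, unit_vec k m)"
  define x1 :: "complex mat_aff"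
    where "x1 = (signed_pascal_mat \<sigma> k, Matrix.vec k (\<lambda>i. of_nat (k choose i)))"
  have \<sigma>: "\<sigma> * \<sigma> = 1" "cnj \<sigma> = \<sigma>" "\<sigma> * (-1)^k = 1"
    by (simp_all add: \<sigma>_def flip: power_add)
  have carrier: "g \<in> mat_aff_carrier k" "x1 \<in> mat_aff_carrier k"
    by (simp_all add: g_def x1_def mat_aff_carrier_def)
  have aug_g: "aug_mat k g = J"
    by (rule eq_matI) (auto simp: aug_mat_def g_def J_def k_def jordan_block_def)
  have aug_x1: "aug_mat k x1 = P"
    by (rule eq_matI) (auto simp: aug_mat_def x1_def P_def \<sigma> binomial_eq_0 less_Suc_eq)
  have real: "map_mat cnj P = P" "map_mat cnj (P * J) = P * J"
    using cnj_hom.mat_hom_mult[OF signed_pascal_mat_carrier jordan_block_carrier]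
    by (simp_all add: P_def J_def map_mat_cnj_signed_pascal map_mat_cnj_jordan_block \<sigma>)
  have invol: "P * P = 1\<^sub>m (Suc k)" "(P * J) * (P * J) = 1\<^sub>m (Suc k)"
    by (simp_all add: P_def J_def signed_pascal_mat_involution signed_pascal_jordan_block_involution \<sigma>)
  let ?x2 = "mat_aff_mult x1 g"
  have aug_x2: "aug_mat k ?x2 = P * J"
    using carrier by (simp add: aug_mat_mult aug_x1 aug_g)
  have "mat_aff_coninvolution k x1"
    using carrier by (intro mat_aff_coninvolution_if_aug_mat)
      (simp_all add: aug_x1 real invol)
  moreover have "mat_aff_coninvolution k ?x2"
    using carrier by (intro mat_aff_coninvolution_if_aug_mat)
      (simp_all add: mat_aff_mult_carrier aug_x2 real invol)
  moreover have "g = mat_aff_mult x1 ?x2"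
  proof (rule aug_mat_inj)
    have "P * (P * J) = J"
      using invol(1) by (simp add: P_def J_def flip: assoc_mult_mat[of _ "Suc k" "Suc k" _ "Suc k" _ "Suc k"])
    then show "aug_mat k g = aug_mat k (mat_aff_mult x1 ?x2)"
      using carrier by (simp add: mat_aff_mult_carrier aug_mat_mult aug_x1 aug_x2 aug_g)
  qed (use carrier in \<open>simp_all add: mat_aff_mult_carrier\<close>)
  ultimately show ?thesis
    unfolding k_def[symmetric] g_def by blast
qed

section \<open>Similarity to a product of two coninvolutions\<close>

text \<open>A right inverse suffices: for square matrices it is two-sided.\<close>

definition mat_aff_invertible :: "nat \<Rightarrow> 'a::semiring_1 mat_aff \<Rightarrow> bool" where
  "mat_aff_invertible n k \<longleftrightarrow>
     k \<in> mat_aff_carrier n \<and> (\<exists>k' \<in> mat_aff_carrier n. mat_aff_mult k k' = mat_aff_one n)"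

lemma mat_aff_invertible_one: "mat_aff_invertible n (mat_aff_one n)"
  unfolding mat_aff_invertible_def
  using mat_aff_one_carrier mat_aff_mult_one_left by blast

lemma mat_aff_invertible_mult:
  assumes "mat_aff_invertible n k" "mat_aff_invertible n l"
  shows "mat_aff_invertible n (mat_aff_mult k l)"
proof -
  obtain k' l' where k: "k \<in> mat_aff_carrier n" "k' \<in> mat_aff_carrier n" "mat_aff_mult k k' = mat_aff_one n"
    and l: "l \<in> mat_aff_carrier n" "l' \<in> mat_aff_carrier n" "mat_aff_mult l l' = mat_aff_one n"
    using assms unfolding mat_aff_invertible_def by blast
  have "mat_aff_mult (mat_aff_mult k l) (mat_aff_mult l' k') = mat_aff_mult k (mat_aff_mult l (mat_aff_mult l' k'))"
    using k l by (simp add: mat_aff_mult_assoc mat_aff_mult_carrier)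
  also have "mat_aff_mult l (mat_aff_mult l' k') = k'"
    using k l by (simp add: mat_aff_mult_one_left flip: mat_aff_mult_assoc)
  also have "mat_aff_mult k k' = mat_aff_one n"
    by (rule k(3))
  finally show ?thesis
    unfolding mat_aff_invertible_def using k l by (blast intro: mat_aff_mult_carrier)
qed

definition similar_to_coninvolution_product :: "nat \<Rightarrow> complex mat_aff \<Rightarrow> bool" where
  "similar_to_coninvolution_product n g \<longleftrightarrow>
     (\<exists>k x1 x2. mat_aff_invertible n k \<and> mat_aff_coninvolution n x1 \<and> mat_aff_coninvolution n x2 \<and>
        mat_aff_mult g k = mat_aff_mult k (mat_aff_mult x1 x2))"

lemma similar_to_coninvolution_product_if_product:
  assumes "mat_aff_coninvolution n x1" "mat_aff_coninvolution n x2"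
  shows "similar_to_coninvolution_product n (mat_aff_mult x1 x2)"
proof -
  have "mat_aff_mult x1 x2 \<in> mat_aff_carrier n"
    using assms by (simp add: mat_aff_coninvolution_def mat_aff_mult_carrier)
  then show ?thesis
    unfolding similar_to_coninvolution_product_def using assms mat_aff_invertible_one
    by (metis mat_aff_mult_one_left mat_aff_mult_one_right)
qed

lemma similar_to_coninvolution_product_similar:
  assumes g: "g \<in> mat_aff_carrier n" and h: "h \<in> mat_aff_carrier n"
    and l: "mat_aff_invertible n l" and gl: "mat_aff_mult g l = mat_aff_mult l h"
    and "similar_to_coninvolution_product n h"
  shows "similar_to_coninvolution_product n g"
proof -
  obtain k x1 x2 where k: "mat_aff_invertible n k" and x: "mat_aff_coninvolution n x1" "mat_aff_coninvolution n x2"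
    and hk: "mat_aff_mult h k = mat_aff_mult k (mat_aff_mult x1 x2)"
    using assms(5) unfolding similar_to_coninvolution_product_def by blast
  have c: "l \<in> mat_aff_carrier n" "k \<in> mat_aff_carrier n" "mat_aff_mult x1 x2 \<in> mat_aff_carrier n"
    using k l x by (auto simp: mat_aff_invertible_def mat_aff_coninvolution_def mat_aff_mult_carrier)
  have "mat_aff_mult g (mat_aff_mult l k) = mat_aff_mult (mat_aff_mult l h) k"
    using g c by (simp flip: gl add: mat_aff_mult_assoc)
  also have "\<dots> = mat_aff_mult (mat_aff_mult l k) (mat_aff_mult x1 x2)"
    using h c by (simp add: mat_aff_mult_assoc hk)
  finally show ?thesis
    unfolding similar_to_coninvolution_product_def using k l x mat_aff_invertible_mult by blast
qed

fun mat_aff_sum :: "nat \<Rightarrow> nat \<Rightarrow> 'a::zero mat_aff \<Rightarrow> 'a mat_aff \<Rightarrow> 'a mat_aff" where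
  "mat_aff_sum n1 n2 (A, v) (B, w) = (four_block_mat A (0\<^sub>m n1 n2) (0\<^sub>m n2 n1) B, v @\<^sub>v w)"

lemma mat_aff_sum_carrier:
  "x \<in> mat_aff_carrier n1 \<Longrightarrow> y \<in> mat_aff_carrier n2 \<Longrightarrow> mat_aff_sum n1 n2 x y \<in> mat_aff_carrier (n1 + n2)"
  by (cases x, cases y) (simp add: mat_aff_carrier_def)

lemma mat_aff_sum_mult:
  fixes x x' y y' :: "'a::semiring_1 mat_aff"
  assumes "x \<in> mat_aff_carrier n1" "x' \<in> mat_aff_carrier n1" "y \<in> mat_aff_carrier n2" "y' \<in> mat_aff_carrier n2"
  shows "mat_aff_mult (mat_aff_sum n1 n2 x y) (mat_aff_sum n1 n2 x' y')
       = mat_aff_sum n1 n2 (mat_aff_mult x x') (mat_aff_mult y y')"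
proof -
  obtain A v A' v' B w B' w' where xy: "x = (A, v)" "x' = (A', v')" "y = (B, w)" "y' = (B', w')"
    and c: "A \<in> carrier_mat n1 n1" "A' \<in> carrier_mat n1 n1" "B \<in> carrier_mat n2 n2" "B' \<in> carrier_mat n2 n2"
      "v \<in> carrier_vec n1" "v' \<in> carrier_vec n1" "w \<in> carrier_vec n2" "w' \<in> carrier_vec n2"
    using assms by (cases x, cases x', cases y, cases y') (auto simp: mat_aff_carrier_def)
  show ?thesis
    using mult_four_block_mat[OF c(1) zero_carrier_mat zero_carrier_mat c(3)
        c(2) zero_carrier_mat zero_carrier_mat c(4)] c
    by (simp add: xy mult_mat_vec_split append_vec_add[of _ n1 _ _ n2])
qed

lemma mat_aff_sum_one:
  "mat_aff_sum n1 n2 (mat_aff_one n1) (mat_aff_one n2) = (mat_aff_one (n1 + n2) :: 'a::semiring_1 mat_aff)"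
  by (auto simp: mat_aff_one_def)

lemma mat_aff_sum_cnj:
  "x \<in> mat_aff_carrier n1 \<Longrightarrow> y \<in> mat_aff_carrier n2 \<Longrightarrow>
    mat_aff_cnj (mat_aff_sum n1 n2 x y) = mat_aff_sum n1 n2 (mat_aff_cnj x) (mat_aff_cnj y)"
  by (cases x, cases y) (auto simp: mat_aff_carrier_def map_four_block_mat)

lemma mat_aff_coninvolution_sum:
  "mat_aff_coninvolution n1 x \<Longrightarrow> mat_aff_coninvolution n2 y \<Longrightarrow>
    mat_aff_coninvolution (n1 + n2) (mat_aff_sum n1 n2 x y)"
  by (simp add: mat_aff_coninvolution_def mat_aff_sum_carrier mat_aff_sum_cnj mat_aff_cnj_carrier
      mat_aff_sum_mult mat_aff_sum_one)

lemma mat_aff_invertible_sum: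
  assumes "mat_aff_invertible n1 k" "mat_aff_invertible n2 l"
  shows "mat_aff_invertible (n1 + n2) (mat_aff_sum n1 n2 k l)"
proof -
  obtain k' l' where "k \<in> mat_aff_carrier n1" "k' \<in> mat_aff_carrier n1" "mat_aff_mult k k' = mat_aff_one n1"
    and "l \<in> mat_aff_carrier n2" "l' \<in> mat_aff_carrier n2" "mat_aff_mult l l' = mat_aff_one n2"
    using assms unfolding mat_aff_invertible_def by blast
  then show ?thesis
    unfolding mat_aff_invertible_def
    by (intro conjI bexI[of _ "mat_aff_sum n1 n2 k' l'"])
       (simp_all add: mat_aff_sum_carrier mat_aff_sum_mult mat_aff_sum_one)
qed

lemma similar_to_coninvolution_product_sum:
  assumes "similar_to_coninvolution_product n1 g" "similar_to_coninvolution_product n2 h"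
    and "g \<in> mat_aff_carrier n1" "h \<in> mat_aff_carrier n2"
  shows "similar_to_coninvolution_product (n1 + n2) (mat_aff_sum n1 n2 g h)"
proof -
  obtain k x1 x2 where k: "mat_aff_invertible n1 k" and x: "mat_aff_coninvolution n1 x1" "mat_aff_coninvolution n1 x2"
    and gk: "mat_aff_mult g k = mat_aff_mult k (mat_aff_mult x1 x2)"
    using assms(1) unfolding similar_to_coninvolution_product_def by blast
  obtain l y1 y2 where l: "mat_aff_invertible n2 l" and y: "mat_aff_coninvolution n2 y1" "mat_aff_coninvolution n2 y2"
    and hl: "mat_aff_mult h l = mat_aff_mult l (mat_aff_mult y1 y2)"
    using assms(2) unfolding similar_to_coninvolution_product_def by blast
  have c: "k \<in> mat_aff_carrier n1" "x1 \<in> mat_aff_carrier n1" "x2 \<in> mat_aff_carrier n1"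
    "l \<in> mat_aff_carrier n2" "y1 \<in> mat_aff_carrier n2" "y2 \<in> mat_aff_carrier n2"
    using k l x y by (auto simp: mat_aff_invertible_def mat_aff_coninvolution_def)
  have "mat_aff_mult (mat_aff_sum n1 n2 g h) (mat_aff_sum n1 n2 k l)
      = mat_aff_mult (mat_aff_sum n1 n2 k l)
          (mat_aff_mult (mat_aff_sum n1 n2 x1 y1) (mat_aff_sum n1 n2 x2 y2))"
    using c assms(3,4) by (simp add: mat_aff_sum_mult mat_aff_mult_carrier gk hl)
  then show ?thesis
    unfolding similar_to_coninvolution_product_def
    using k l x y mat_aff_invertible_sum mat_aff_coninvolution_sum by blast
qed

lemma similar_to_coninvolution_product_affine_change:
  fixes A :: "complex Matrix.mat"
  assumes A: "A \<in> carrier_mat n n" and vecs: "u \<in> carrier_vec n" "u' \<in> carrier_vec n" "a \<in> carrier_vec n"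
    and c: "c \<noteq> 0" and eq: "A *\<^sub>v a + u = a + c \<cdot>\<^sub>v u'"
    and "similar_to_coninvolution_product n (A, u')"
  shows "similar_to_coninvolution_product n (A, u)"
proof (rule similar_to_coninvolution_product_similar)
  let ?l = "(c \<cdot>\<^sub>m 1\<^sub>m n, a)"
  show "mat_aff_invertible n ?l"
    unfolding mat_aff_invertible_def
    using vecs c
    by (intro conjI bexI[of _ "(inverse c \<cdot>\<^sub>m 1\<^sub>m n, - (inverse c \<cdot>\<^sub>v a))"])
       (auto simp: mat_aff_carrier_def mat_aff_one_def mult_smult_assoc_mat[of _ n n _ n])
  have "(c \<cdot>\<^sub>m 1\<^sub>m n) *\<^sub>v u' = c \<cdot>\<^sub>v u'"
    using vecs by auto
  then show "mat_aff_mult (A, u) ?l = mat_aff_mult ?l (A, u')"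
    using A vecs eq
    by (simp add: mult_smult_assoc_mat[of _ n n _ n] mult_smult_distrib[of _ n n _ n] comm_add_vec[of _ n])
qed (use assms in \<open>simp_all add: mat_aff_carrier_def\<close>)

lemma similar_to_coninvolution_product_jordan_block:
  assumes u: "u \<in> carrier_vec k"
  shows "similar_to_coninvolution_product k (jordan_block k 1, u)"
proof -
  have zero: "similar_to_coninvolution_product k (jordan_block k 1, 0\<^sub>v k)"
    using jordan_block_zero_coninvolution_product similar_to_coninvolution_product_if_product by metis
  show ?thesis
  proof (cases k)
    case 0
    then show ?thesis
      using u zero by (metis carrier_vecD eq_vecI less_nat_zero_code index_zero_vec(2))
  next
    case (Suc m)
    have unit: "similar_to_coninvolution_product k (jordan_block k 1, unit_vec k m)"
      using jordan_block_unit_coninvolution_product similar_to_coninvolution_product_if_product Suc by metis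
    \<comment> \<open>\<open>(J - 1) a\<close> is \<open>a\<close> shifted up, so this choice clears all but the last entry of \<open>J a + u - a\<close>\<close>
    define a :: "complex Matrix.vec" where "a = Matrix.vec k (\<lambda>i. if i = 0 then 0 else - u $ (i - 1))"
    have a: "a \<in> carrier_vec k"
      by (simp add: a_def)
    have eq: "jordan_block k 1 *\<^sub>v a + u = a + u $ m \<cdot>\<^sub>v unit_vec k m"
    proof (rule eq_vecI)
      fix i assume "i < dim_vec (a + u $ m \<cdot>\<^sub>v unit_vec k m)"
      then have i: "i < k"
        by (simp add: a_def)
      show "(jordan_block k 1 *\<^sub>v a + u) $ i = (a + u $ m \<cdot>\<^sub>v unit_vec k m) $ i"
        using jordan_block_one_mult_vec_index[OF a i] i u Suc by (auto simp: a_def)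
    qed (use u in \<open>simp add: a_def\<close>)
    show ?thesis
    proof (cases "u $ m = 0")
      case True
      show ?thesis
        by (rule similar_to_coninvolution_product_affine_change[where c = 1 and u' = "0\<^sub>v k" and a = a])
           (use u a eq True zero in auto)
    next
      case False
      show ?thesis
        by (rule similar_to_coninvolution_product_affine_change[where c = "u $ m" and u' = "unit_vec k m" and a = a])
           (use u a eq False unit in auto)
    qed
  qed
qed

lemma similar_to_coninvolution_product_jordan_matrix:
  assumes "\<forall>(k, a) \<in> set n_as. a = 1" and "c \<in> carrier_vec (sum_list (map fst n_as))"
  shows "similar_to_coninvolution_product (sum_list (map fst n_as)) (jordan_matrix n_as, c)"
  using assms
proof (induction n_as arbitrary: c)
  case Nil
  have "jordan_matrix [] = (jordan_block 0 1 :: complex Matrix.mat)"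
    by (rule eq_matI) (auto simp: jordan_matrix_def)
  then show ?case
    using similar_to_coninvolution_product_jordan_block[of c 0] Nil by simp
next
  case (Cons p n_as)
  obtain k where p: "p = (k, 1)"
    using Cons.prems(1) by (cases p) auto
  let ?N = "sum_list (map fst n_as)"
  have c: "c \<in> carrier_vec (k + ?N)"
    using Cons.prems(2) p by simp
  have "(jordan_matrix (p # n_as), c)
      = mat_aff_sum k ?N (jordan_block k 1, vec_first c k) (jordan_matrix n_as, vec_last c ?N)"
    using c by (simp add: p jordan_matrix_Cons)
  moreover have "similar_to_coninvolution_product (k + ?N)
      (mat_aff_sum k ?N (jordan_block k 1, vec_first c k) (jordan_matrix n_as, vec_last c ?N))"
    using Cons c
    by (intro similar_to_coninvolution_product_sum similar_to_coninvolution_product_jordan_block)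
       (auto simp: mat_aff_carrier_def)
  ultimately show ?case
    by (simp add: p)
qed

lemma jordan_nf_eigenvalue:
  fixes A :: "'a::field Matrix.mat"
  assumes A: "A \<in> carrier_mat n n" and jnf: "jordan_nf A n_as" and ka: "(k, a) \<in> set n_as"
  shows "eigenvalue A a"
proof -
  have "0 < k"
    using jnf ka unfolding jordan_nf_def by (metis fst_conv gr0I image_eqI)
  then have "poly (\<Prod>(k, a) \<leftarrow> n_as. [:- a, 1:] ^ k) a = 0"
    using ka by (induction n_as) auto
  then show ?thesis
    by (simp add: eigenvalue_root_char_poly[OF A] jordan_nf_char_poly[OF jnf])
qed

lemma similar_to_coninvolution_product_unipotent:
  fixes A :: "complex Matrix.mat"
  assumes A: "A \<in> carrier_mat n n" and unipotent: "\<And>a. eigenvalue A a \<Longrightarrow> a = 1"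
    and c: "c \<in> carrier_vec n"
  shows "similar_to_coninvolution_product n (A, c)"
proof -
  obtain n_as where jnf: "jordan_nf A n_as"
    using char_poly_factorized[OF A] jordan_nf_exists[OF A] by blast
  then have ones: "\<forall>(k, a) \<in> set n_as. a = 1"
    using jordan_nf_eigenvalue[OF A] unipotent by blast
  obtain P Q where PQ: "similar_mat_wit A (jordan_matrix n_as) P Q"
    using jnf unfolding jordan_nf_def similar_mat_def by blast
  let ?J = "jordan_matrix n_as"
  have PQ: "P \<in> carrier_mat n n" "Q \<in> carrier_mat n n" "?J \<in> carrier_mat n n"
    "P * Q = 1\<^sub>m n" "Q * P = 1\<^sub>m n" "A = P * ?J * Q"
    using PQ A unfolding similar_mat_wit_def Let_def by auto
  then have N: "sum_list (map fst n_as) = n"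
    by (metis carrier_matD(1) jordan_matrix_dim(1))
  show ?thesis
  proof (rule similar_to_coninvolution_product_similar)
    show "mat_aff_invertible n (P, 0\<^sub>v n)"
      unfolding mat_aff_invertible_def
      using PQ by (intro conjI bexI[of _ "(Q, 0\<^sub>v n)"]) (auto simp: mat_aff_carrier_def mat_aff_one_def)
    have "A * P = P * ?J"
      using PQ by (simp add: assoc_mult_mat[of _ n n _ n _ n] right_mult_one_mat[OF PQ(3)])
    then show "mat_aff_mult (A, c) (P, 0\<^sub>v n) = mat_aff_mult (P, 0\<^sub>v n) (?J, Q *\<^sub>v c)"
      using PQ A c by (auto simp flip: assoc_mult_mat_vec)
    show "similar_to_coninvolution_product n (?J, Q *\<^sub>v c)"
      using similar_to_coninvolution_product_jordan_matrix[OF ones] PQ c N by simp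
  qed (use PQ A c in \<open>simp_all add: mat_aff_carrier_def\<close>)
qed

section \<open>The affine group \<open>Aff(n, \<complex>)\<close>\<close>

unbundle vec_syntax
no_notation Matrix.vec_index (infixl \<open>$\<close> 100)

lemma aff_mult_assoc: "aff_mult (aff_mult a b) c = aff_mult a (aff_mult b c)"
  by (cases a, cases b, cases c)
     (simp add: aff_mult_def matrix_mul_assoc matrix_vector_mul_assoc matrix_vector_right_distrib add.assoc)

lemma aff_mult_id_left [simp]: "aff_mult aff_id a = a"
  by (cases a) (simp add: aff_mult_def aff_id_def)

lemma aff_mult_id_right [simp]: "aff_mult a aff_id = a"
  by (cases a) (simp add: aff_mult_def aff_id_def)

lemma aff_conj_mult: "aff_conj (aff_mult a b) = aff_mult (aff_conj a) (aff_conj b)"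
  by (cases a, cases b)
     (simp add: aff_mult_def aff_conj_def Finite_Cartesian_Product.vec_eq_iff matrix_matrix_mult_def matrix_vector_mult_def)

lemma aff_conj_conj [simp]: "aff_conj (aff_conj a) = a"
  by (cases a) (simp add: aff_conj_def Finite_Cartesian_Product.vec_eq_iff)

lemma aff_conj_id [simp]: "aff_conj aff_id = aff_id"
  by (simp add: aff_conj_def aff_id_def Finite_Cartesian_Product.vec_eq_iff Finite_Cartesian_Product.mat_def)

lemma aff_mult_eq_id_commute:
  assumes "aff_mult a b = aff_id"
  shows "aff_mult b a = aff_id"
proof -
  obtain A v B w where ab: "a = (A, v)" "b = (B, w)"
    by (cases a, cases b)
  have AB: "A ** B = Finite_Cartesian_Product.mat 1" and v: "A *v w + v = 0"
    using assms by (simp_all add: ab aff_mult_def aff_id_def)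
  have BA: "B ** A = Finite_Cartesian_Product.mat 1"
    using AB matrix_left_right_inverse by blast
  have "B *v v + w = B *v (A *v w + v)"
    by (simp add: matrix_vector_right_distrib matrix_vector_mul_assoc BA)
  then show ?thesis
    by (simp add: ab aff_mult_def aff_id_def BA v)
qed

lemma matrix_inv_unique:
  fixes A B :: "'a::field^'n^'n"
  assumes "A ** B = Finite_Cartesian_Product.mat 1"
  shows "matrix_inv A = B"
proof -
  have BA: "B ** A = Finite_Cartesian_Product.mat 1"
    using assms matrix_left_right_inverse by blast
  have "matrix_inv A ** A = Finite_Cartesian_Product.mat 1"
    unfolding matrix_inv_def by (rule someI2[of _ B]) (use assms BA in simp_all)
  then have "matrix_inv A ** (A ** B) = B"
    by (simp add: matrix_mul_assoc)
  then show ?thesis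
    by (simp add: assms)
qed

lemma aff_inv_unique:
  assumes "aff_mult a b = aff_id"
  shows "aff_inv a = b"
proof -
  obtain A v B w where ab: "a = (A, v)" "b = (B, w)"
    by (cases a, cases b)
  have AB: "A ** B = Finite_Cartesian_Product.mat 1" and v: "A *v w = - v"
    using assms by (simp_all add: ab aff_mult_def aff_id_def eq_neg_iff_add_eq_0)
  have "B *v (A *v w) = w"
    using AB matrix_left_right_inverse by (metis matrix_vector_mul_assoc matrix_vector_mul_lid)
  then have "- (B *v v) = w"
    using matrix_vector_mult_diff_distrib[of B 0 v] by (simp add: v)
  then show ?thesis
    by (simp add: ab aff_inv_def matrix_inv_unique[OF AB])
qed

lemma coninvolution_iff: "coninvolution h \<longleftrightarrow> aff_mult h (aff_conj h) = aff_id"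
proof
  assume h: "aff_mult h (aff_conj h) = aff_id"
  obtain A v where "h = (A, v)"
    by (cases h)
  with h have "A ** (\<chi> i j. cnj (A $ i $ j)) = Finite_Cartesian_Product.mat 1"
    by (simp add: aff_mult_def aff_conj_def aff_id_def)
  then have "invertible A"
    using invertible_right_inverse by blast
  with h show "coninvolution h"
    by (simp add: coninvolution_def aff_group_def \<open>h = (A, v)\<close>)
qed (simp add: coninvolution_def)

lemma aff_mult_cancel_left:
  "aff_mult a b = aff_id \<Longrightarrow> aff_mult a (aff_mult b c) = c"
  by (simp flip: aff_mult_assoc)

lemma coninvolution_conjugate:
  assumes "aff_mult k k' = aff_id" "coninvolution x"
  shows "coninvolution (aff_mult (aff_mult k x) (aff_conj k'))"
proof -
  have "aff_mult (aff_conj k') (aff_conj k) = aff_id"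
    using aff_mult_eq_id_commute[OF assms(1)] by (metis aff_conj_mult aff_conj_id)
  moreover have "aff_mult x (aff_conj x) = aff_id"
    using assms(2) by (simp add: coninvolution_iff)
  ultimately show ?thesis
    using assms(1) by (simp add: coninvolution_iff aff_conj_mult aff_mult_assoc aff_mult_cancel_left)
qed

lemma coninvolution_product_if_similar:
  assumes kk': "aff_mult k k' = aff_id" and x: "coninvolution x1" "coninvolution x2"
    and gk: "aff_mult g k = aff_mult k (aff_mult x1 x2)"
  shows "\<exists>h1 h2. coninvolution h1 \<and> coninvolution h2 \<and> g = aff_mult h1 h2"
proof -
  define h1 where "h1 = aff_mult (aff_mult k x1) (aff_conj k')"
  define h2 where "h2 = aff_mult (aff_mult (aff_conj k) x2) k'"
  have "aff_mult (aff_conj k) (aff_conj k') = aff_id"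
    using kk' by (metis aff_conj_mult aff_conj_id)
  then have "coninvolution h1" "coninvolution h2"
    using coninvolution_conjugate[OF kk' x(1)] coninvolution_conjugate[of "aff_conj k" "aff_conj k'" x2] x(2)
    by (simp_all add: h1_def h2_def)
  moreover have "g = aff_mult h1 h2"
  proof -
    have k'k: "aff_mult (aff_conj k') (aff_conj k) = aff_id"
      using aff_mult_eq_id_commute[OF kk'] by (metis aff_conj_mult aff_conj_id)
    have "g = aff_mult (aff_mult g k) k'"
      by (simp add: aff_mult_assoc kk')
    also have "\<dots> = aff_mult (aff_mult k (aff_mult x1 x2)) k'"
      by (simp only: gk)
    also have "\<dots> = aff_mult h1 h2"
      using k'k by (simp add: h1_def h2_def aff_mult_assoc aff_mult_cancel_left)
    finally show ?thesis .
  qed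
  ultimately show ?thesis
    by blast
qed

lemma strongly_c_reversible_if_coninvolution_product:
  assumes h1: "coninvolution h1" and h2: "coninvolution h2"
  shows "strongly_c_reversible (aff_mult h1 h2)"
  unfolding strongly_c_reversible_def
proof (intro exI conjI)
  have h1': "aff_mult (aff_conj h1) h1 = aff_id" and h2': "aff_mult (aff_conj h2) h2 = aff_id"
    using h1 h2 by (simp_all add: coninvolution_iff aff_mult_eq_id_commute)
  then show "coninvolution (aff_conj h1)"
    by (simp add: coninvolution_iff)
  have "aff_mult (aff_conj (aff_mult h1 h2)) (aff_mult h2 h1) = aff_id"
    using h1' h2' by (simp add: aff_conj_mult aff_mult_assoc aff_mult_cancel_left)
  then show "aff_mult (aff_mult (aff_conj h1) (aff_mult h1 h2)) (aff_inv (aff_conj h1))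
      = aff_inv (aff_conj (aff_mult h1 h2))"
    using h1' by (simp add: aff_inv_unique aff_mult_cancel_left aff_mult_assoc)
qed

section \<open>Transfer from JNF matrices to Cartesian matrices\<close>

definition hma_index :: "'n::finite \<Rightarrow> nat" where
  "hma_index = (SOME f. bij_betw f UNIV {0..<CARD('n)})"

definition hma_point :: "nat \<Rightarrow> 'n::finite" where
  "hma_point = inv_into UNIV hma_index"

lemma bij_hma_index: "bij_betw (hma_index :: 'n::finite \<Rightarrow> nat) UNIV {0..<CARD('n)}"
  unfolding hma_index_def using ex_bij_betw_finite_nat[of "UNIV :: 'n set"] by (rule someI_ex) simp

lemma hma_index_less [simp]: "hma_index (i :: 'n::finite) < CARD('n)"
  using bij_hma_index[where 'n='n] by (auto simp: bij_betw_def)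

lemma hma_point_hma_index [simp]: "hma_point (hma_index (i :: 'n::finite)) = i"
  by (simp add: hma_point_def bij_betw_imp_inj_on[OF bij_hma_index])

lemma hma_index_eq_iff [simp]: "hma_index i = hma_index j \<longleftrightarrow> i = j"
  by (metis hma_point_hma_index)

lemma hma_index_hma_point [simp]: "l < CARD('n::finite) \<Longrightarrow> hma_index (hma_point l :: 'n) = l"
  using bij_hma_index[where 'n='n] unfolding hma_point_def bij_betw_def by (auto intro!: f_inv_into_f)

lemma sum_hma_index: "(\<Sum>k\<in>UNIV. f (hma_index (k :: 'n::finite))) = (\<Sum>l<CARD('n). f l)"
  using sum.reindex_bij_betw[OF bij_hma_index[where 'n='n], of f] by (simp add: lessThan_atLeast0)

definition to_hma_m :: "'a Matrix.mat \<Rightarrow> 'a^'n::finite^'n" where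
  "to_hma_m A = (\<chi> i j. A $$ (hma_index i, hma_index j))"

definition to_hma_v :: "'a Matrix.vec \<Rightarrow> 'a^'n::finite" where
  "to_hma_v v = (\<chi> i. vec_index v (hma_index i))"

definition from_hma_m :: "'a^'n::finite^'n \<Rightarrow> 'a Matrix.mat" where
  "from_hma_m A = Matrix.mat CARD('n) CARD('n) (\<lambda>(i, j). A $ hma_point i $ hma_point j)"

definition from_hma_v :: "'a^'n::finite \<Rightarrow> 'a Matrix.vec" where
  "from_hma_v x = Matrix.vec CARD('n) (\<lambda>i. x $ hma_point i)"

lemma from_hma_m_carrier: "from_hma_m (A :: 'a^'n::finite^'n) \<in> carrier_mat CARD('n) CARD('n)"
  by (simp add: from_hma_m_def)

lemma from_hma_v_carrier: "from_hma_v (x :: 'a^'n::finite) \<in> carrier_vec CARD('n)"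
  by (simp add: from_hma_v_def)

lemma to_hma_from_hma_m [simp]: "to_hma_m (from_hma_m A) = A"
  by (simp add: to_hma_m_def from_hma_m_def Finite_Cartesian_Product.vec_eq_iff)

lemma to_hma_from_hma_v [simp]: "to_hma_v (from_hma_v x) = x"
  by (simp add: to_hma_v_def from_hma_v_def Finite_Cartesian_Product.vec_eq_iff)

lemma to_hma_m_mult:
  fixes A B :: "'a::semiring_1 Matrix.mat"
  assumes "A \<in> carrier_mat CARD('n::finite) CARD('n)" "B \<in> carrier_mat CARD('n) CARD('n)"
  shows "(to_hma_m (A * B) :: 'a^'n^'n) = to_hma_m A ** to_hma_m B"
  using assms
  by (simp add: to_hma_m_def matrix_matrix_mult_def Finite_Cartesian_Product.vec_eq_iff
      sum_hma_index[where f = "\<lambda>l. A $$ (_, l) * B $$ (l, _)"] index_mult_mat_sum[of _ "CARD('n)" "CARD('n)"]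
      del: index_mult_mat)

lemma to_hma_mult_mat_vec:
  fixes A :: "'a::semiring_1 Matrix.mat"
  assumes "A \<in> carrier_mat CARD('n::finite) CARD('n)" "v \<in> carrier_vec CARD('n)"
  shows "(to_hma_v (A *\<^sub>v v) :: 'a^'n) = to_hma_m A *v to_hma_v v"
  using assms
  by (simp add: to_hma_m_def to_hma_v_def matrix_vector_mult_def Finite_Cartesian_Product.vec_eq_iff
      sum_hma_index[where f = "\<lambda>l. A $$ (_, l) * vec_index v l"] index_mult_mat_vec_sum[of _ "CARD('n)"]
      del: index_mult_mat_vec)

lemma to_hma_v_add:
  "v \<in> carrier_vec CARD('n::finite) \<Longrightarrow> w \<in> carrier_vec CARD('n) \<Longrightarrow>
    (to_hma_v (v + w) :: 'a::plus^'n) = to_hma_v v + to_hma_v w"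
  by (simp add: to_hma_v_def Finite_Cartesian_Product.vec_eq_iff)

lemma to_hma_v_smult:
  "v \<in> carrier_vec CARD('n::finite) \<Longrightarrow> (to_hma_v (a \<cdot>\<^sub>v v) :: 'a::times^'n) = a *s to_hma_v v"
  by (simp add: to_hma_v_def Finite_Cartesian_Product.vec_eq_iff)

lemma to_hma_m_one: "(to_hma_m (1\<^sub>m CARD('n::finite)) :: 'a::semiring_1^'n^'n) = Finite_Cartesian_Product.mat 1"
  by (simp add: to_hma_m_def Finite_Cartesian_Product.vec_eq_iff Finite_Cartesian_Product.mat_def)

lemma to_hma_v_zero: "(to_hma_v (0\<^sub>v CARD('n::finite)) :: 'a::zero^'n) = 0"
  by (simp add: to_hma_v_def Finite_Cartesian_Product.vec_eq_iff)

definition to_hma_aff :: "complex mat_aff \<Rightarrow> 'n::finite aff" where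
  "to_hma_aff x = (to_hma_m (fst x), to_hma_v (snd x))"

lemma to_hma_aff_mult:
  "x \<in> mat_aff_carrier CARD('n::finite) \<Longrightarrow> y \<in> mat_aff_carrier CARD('n) \<Longrightarrow>
    (to_hma_aff (mat_aff_mult x y) :: 'n aff) = aff_mult (to_hma_aff x) (to_hma_aff y)"
  by (cases x, cases y)
     (auto simp: mat_aff_carrier_def to_hma_aff_def aff_mult_def to_hma_m_mult to_hma_mult_mat_vec to_hma_v_add)

lemma to_hma_aff_one: "(to_hma_aff (mat_aff_one CARD('n::finite)) :: 'n aff) = aff_id"
  by (simp add: to_hma_aff_def mat_aff_one_def aff_id_def to_hma_m_one to_hma_v_zero)

lemma to_hma_aff_cnj:
  "x \<in> mat_aff_carrier CARD('n::finite) \<Longrightarrow> (to_hma_aff (mat_aff_cnj x) :: 'n aff) = aff_conj (to_hma_aff x)"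
  by (cases x)
     (auto simp: mat_aff_carrier_def to_hma_aff_def aff_conj_def to_hma_m_def to_hma_v_def
       Finite_Cartesian_Product.vec_eq_iff)

lemma coninvolution_to_hma_aff:
  "mat_aff_coninvolution CARD('n::finite) x \<Longrightarrow> coninvolution (to_hma_aff x :: 'n aff)"
  by (auto simp: mat_aff_coninvolution_def coninvolution_iff mat_aff_cnj_carrier
      simp flip: to_hma_aff_cnj to_hma_aff_mult to_hma_aff_one)

lemma coninvolution_product_if_similar_to_hma:
  assumes "similar_to_coninvolution_product CARD('n::finite) g" "g \<in> mat_aff_carrier CARD('n)"
  shows "\<exists>h1 h2. coninvolution h1 \<and> coninvolution h2 \<and> (to_hma_aff g :: 'n aff) = aff_mult h1 h2"
proof -
  obtain k k' x1 x2 where k: "k \<in> mat_aff_carrier CARD('n)" "k' \<in> mat_aff_carrier CARD('n)"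
      "mat_aff_mult k k' = mat_aff_one CARD('n)"
    and x: "mat_aff_coninvolution CARD('n) x1" "mat_aff_coninvolution CARD('n) x2"
    and gk: "mat_aff_mult g k = mat_aff_mult k (mat_aff_mult x1 x2)"
    using assms(1) unfolding similar_to_coninvolution_product_def mat_aff_invertible_def by blast
  have x12: "x1 \<in> mat_aff_carrier CARD('n)" "x2 \<in> mat_aff_carrier CARD('n)"
    "mat_aff_mult x1 x2 \<in> mat_aff_carrier CARD('n)"
    using x by (simp_all add: mat_aff_coninvolution_def mat_aff_mult_carrier)
  have "aff_mult (to_hma_aff k) (to_hma_aff k') = (to_hma_aff (mat_aff_mult k k') :: 'n aff)"
    by (rule to_hma_aff_mult[symmetric]) (rule k)+
  then have kk': "aff_mult (to_hma_aff k) (to_hma_aff k') = (aff_id :: 'n aff)"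
    by (simp add: k(3) to_hma_aff_one)
  have "aff_mult (to_hma_aff g) (to_hma_aff k) = (to_hma_aff (mat_aff_mult g k) :: 'n aff)"
    by (rule to_hma_aff_mult[symmetric]) (rule assms(2) k(1))+
  also have "\<dots> = aff_mult (to_hma_aff k) (to_hma_aff (mat_aff_mult x1 x2))"
    unfolding gk by (rule to_hma_aff_mult) (rule k(1) x12(3))+
  also have "to_hma_aff (mat_aff_mult x1 x2) = (aff_mult (to_hma_aff x1) (to_hma_aff x2) :: 'n aff)"
    by (rule to_hma_aff_mult) (rule x12)+
  finally show ?thesis
    by (rule coninvolution_product_if_similar[OF kk' coninvolution_to_hma_aff[OF x(1)]
          coninvolution_to_hma_aff[OF x(2)]])
qed

lemma eigenvalue_from_hma_m:
  fixes A :: "complex^'n::finite^'n"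
  assumes "eigenvalue (from_hma_m A) a"
  shows "\<exists>x. x \<noteq> 0 \<and> A *v x = a *s x"
proof -
  obtain v where v: "v \<in> carrier_vec CARD('n)" "v \<noteq> 0\<^sub>v CARD('n)" "from_hma_m A *\<^sub>v v = a \<cdot>\<^sub>v v"
    using assms from_hma_m_carrier[of A] by (auto simp: eigenvalue_def eigenvector_def)
  have "A *v to_hma_v v = a *s to_hma_v v"
    using to_hma_mult_mat_vec[OF from_hma_m_carrier v(1), of A] v by (simp add: to_hma_v_smult)
  moreover obtain i where "i < CARD('n)" "vec_index v i \<noteq> 0"
    using v(1,2) by (metis carrier_vecD eq_vecI index_zero_vec)
  then have "(to_hma_v v :: complex^'n) $ hma_point i \<noteq> 0"
    by (simp add: to_hma_v_def)
  then have "(to_hma_v v :: complex^'n) \<noteq> 0"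
    by auto
  ultimately show ?thesis
    by blast
qed

theorem proposition3p6:
  fixes U :: "complex^'n::finite^'n" and v :: "complex^'n"
  assumes "invertible U" and "unipotent U"
  shows "strongly_c_reversible (U, v) \<and>
         (\<exists>h1 h2. coninvolution h1 \<and> coninvolution h2 \<and> (U, v) = aff_mult h1 h2)"
proof -
  have "a = 1" if "eigenvalue (from_hma_m U) a" for a
    using eigenvalue_from_hma_m[OF that] \<open>unipotent U\<close> unfolding unipotent_def by blast
  then have "similar_to_coninvolution_product CARD('n) (from_hma_m U, from_hma_v v)"
    by (intro similar_to_coninvolution_product_unipotent from_hma_m_carrier from_hma_v_carrier)
  moreover have "(from_hma_m U, from_hma_v v) \<in> mat_aff_carrier CARD('n)"
    by (simp add: mat_aff_carrier_def from_hma_m_carrier from_hma_v_carrier)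
  ultimately have "\<exists>h1 h2. coninvolution h1 \<and> coninvolution h2 \<and>
      (to_hma_aff (from_hma_m U, from_hma_v v) :: 'n aff) = aff_mult h1 h2"
    by (rule coninvolution_product_if_similar_to_hma)
  then obtain h1 h2 where h: "coninvolution h1" "coninvolution h2" "(U, v) = aff_mult h1 h2"
    by (auto simp: to_hma_aff_def)
  then show ?thesis
    unfolding h(3) using strongly_c_reversible_if_coninvolution_product by blast
qed

end
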